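(* Consider an infinite execution $\gamma_0\gamma_1\ldots$ of the unison dynamics with $\gamma_0$ satisfying $WU_0$, in which every process increments its clock infinitely often, and let $\bot_0$, $\widetilde{p^t.r}$, $t_{p,k}$ and $C_k$ be as in the context. Then for every integer $k\ge \bot_0+D$, $C_k$ is a well-defined coherent cut.
   Context: Let $G=(V,E)$ be a finite connected undirected graph, $|V|=n\ge 2$, $\mathcal N_p$ the set of neighbors of $p$, $d(p,q)$ the hop distance, $D$ the diameter, and $V(p,r)=\{q\in V: d(p,q)\le r\}$. Fix an integer $M\ge 3$; for an integer $a$, $\bar a\in\{0,\dots,M-1\}$ denotes its residue modulo $M$. Each process $p$ holds a clock $p.r\in\{0,\dots,M-1\}$; $p^t.r$ denotes its value in configuration $\gamma_t$. Integers $a,b$ are locally comparable if $\min(\overline{a-b},\overline{b-a})\le 1$, and then $b\ominus a=\overline{b-a}$ if $\overline{b-a}\le 1$, and $b\ominus a=-\overline{a-b}$ otherwise. A configuration satisfies $WU$ if for every edge $\{p,q\}$, $p.r$ and $q.r$ are locally comparable. The delay of a path $\mu=p_0p_1\ldots p_k$ is $\delta_\mu=\sum_{i=0}^{k-1}(p_{i+1}.r\ominus p_i.r)$ ($0$ if $k=0$). A configuration satisfies $WU_0$ if it satisfies $WU$ and the delay is intrinsic: for all $p,q$, all paths from $p$ to $q$ have the same delay, denoted $\delta_{(p,q)}$ ($\delta^t_{(p,q)}$ in $\gamma_t$). Dynamics: a process $p$ is enabled iff for every $q\in\mathcal N_p$, $q.r=p.r$ or $q.r=\overline{p.r+1}$.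 In a transition $\gamma_t\to\gamma_{t+1}$ a nonempty set of processes enabled in $\gamma_t$ is chosen (by an arbitrary, possibly unfair, daemon) and each of them sets $p.r:=\overline{p.r+1}$; other clocks are unchanged. Events: $(p,0)$ is an event for every $p$; $(p,t+1)$ is an event iff $p$ increments in $\gamma_t\to\gamma_{t+1}$. Causal relation $\leadsto$: for an event $(p,t)$ with $t>0$, $(p,t')\leadsto(p,t)$ where $t'$ is the largest time $<t$ such that $(p,t')$ is an event, and for each $q\in\mathcal N_p$, $(q,t')\leadsto(p,t)$ where $t'$ is the largest time $<t$ such that $(q,t')$ is an event. $\preceq$ is the reflexive–transitive closure of $\leadsto$. Lifting: assume $\gamma_0$ satisfies $WU_0$. Choose $p_0$ with $\delta^0_{(p_0,q)}\ge 0$ for all $q\in V$, and let $\bot_0=p_0^0.r$. Define integers $\widetilde{p^t.r}$ by $\widetilde{p^0.r}=\bot_0+\delta^0_{(p_0,p)}$, and $\widetilde{p^{t+1}.r}=\widetilde{p^t.r}+1$ if $p$ increments in $\gamma_t\to\gamma_{t+1}$, $\widetilde{p^{t+1}.r}=\widetilde{p^t.r}$ otherwise. For an integer $k$, $t_{p,k}$ is the smallest $t$ with $\widetilde{p^t.r}=k$, and $C_k=\{(p,t_{p,k}):p\in V\}$. A cut is a map $C:p\mapsto t^C_p$ (identified with the set $\{(p,t^C_p)\}$) such that each $(p,t^C_p)$ is an event. A cut $C$ is coherent if whenever $(q,t')\preceq(p,t)\preceq(p,t^C_p)$, then $(q,t')\preceq(q,t^C_q)$. *)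

theory Defs
  imports Main
begin

definition ugraph :: "'a set \<Rightarrow> ('a \<Rightarrow> 'a \<Rightarrow> bool) \<Rightarrow> bool" where
  "ugraph V E \<longleftrightarrow> finite V \<and> (\<forall>p q. E p q \<longrightarrow> p \<in> V \<and> q \<in> V)
     \<and> (\<forall>p q. E p q \<longrightarrow> E q p) \<and> (\<forall>p. \<not> E p p)"

definition nbrs :: "'a set \<Rightarrow> ('a \<Rightarrow> 'a \<Rightarrow> bool) \<Rightarrow> 'a \<Rightarrow> 'a set" where
  "nbrs V E p = {q \<in> V. E p q}"

fun adj_list :: "('a \<Rightarrow> 'a \<Rightarrow> bool) \<Rightarrow> 'a list \<Rightarrow> bool" where
  "adj_list E [] = True"
| "adj_list E [x] = True"
| "adj_list E (x # y # xs) = (E x y \<and> adj_list E (y # xs))"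

definition is_path :: "'a set \<Rightarrow> ('a \<Rightarrow> 'a \<Rightarrow> bool) \<Rightarrow> 'a \<Rightarrow> 'a list \<Rightarrow> 'a \<Rightarrow> bool" where
  "is_path V E p xs q \<longleftrightarrow> xs \<noteq> [] \<and> set xs \<subseteq> V \<and> adj_list E xs \<and> hd xs = p \<and> last xs = q"

definition connected_graph :: "'a set \<Rightarrow> ('a \<Rightarrow> 'a \<Rightarrow> bool) \<Rightarrow> bool" where
  "connected_graph V E \<longleftrightarrow> (\<forall>p\<in>V. \<forall>q\<in>V. \<exists>xs. is_path V E p xs q)"

definition hop_dist :: "'a set \<Rightarrow> ('a \<Rightarrow> 'a \<Rightarrow> bool) \<Rightarrow> 'a \<Rightarrow> 'a \<Rightarrow> nat" where
  "hop_dist V E p q = (LEAST n. \<exists>xs. is_path V E p xs q \<and> length xs = Suc n)"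

definition diameter :: "'a set \<Rightarrow> ('a \<Rightarrow> 'a \<Rightarrow> bool) \<Rightarrow> nat" where
  "diameter V E = Max {hop_dist V E p q | p q. p \<in> V \<and> q \<in> V}"

definition res :: "int \<Rightarrow> int \<Rightarrow> int" where
  "res M a = a mod M"

definition loc_comp :: "int \<Rightarrow> int \<Rightarrow> int \<Rightarrow> bool" where
  "loc_comp M a b \<longleftrightarrow> min (res M (a - b)) (res M (b - a)) \<le> 1"

definition ominus :: "int \<Rightarrow> int \<Rightarrow> int \<Rightarrow> int" where
  "ominus M b a = (if res M (b - a) \<le> 1 then res M (b - a) else - res M (a - b))"

definition WU :: "int \<Rightarrow> 'a set \<Rightarrow> ('a \<Rightarrow> 'a \<Rightarrow> bool) \<Rightarrow> ('a \<Rightarrow> int) \<Rightarrow> bool" where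
  "WU M V E c \<longleftrightarrow> (\<forall>p q. E p q \<longrightarrow> loc_comp M (c p) (c q))"

fun delay :: "int \<Rightarrow> ('a \<Rightarrow> int) \<Rightarrow> 'a list \<Rightarrow> int" where
  "delay M c [] = 0"
| "delay M c [x] = 0"
| "delay M c (x # y # xs) = ominus M (c y) (c x) + delay M c (y # xs)"

definition WU0 :: "int \<Rightarrow> 'a set \<Rightarrow> ('a \<Rightarrow> 'a \<Rightarrow> bool) \<Rightarrow> ('a \<Rightarrow> int) \<Rightarrow> bool" where
  "WU0 M V E c \<longleftrightarrow> WU M V E c \<and>
     (\<forall>p q xs ys. is_path V E p xs q \<longrightarrow> is_path V E p ys q \<longrightarrow> delay M c xs = delay M c ys)"

text \<open>Intrinsic delay delta_(p,q) (meaningful under WU0: the common delay of all paths p to q).\<close>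
definition idelay :: "int \<Rightarrow> 'a set \<Rightarrow> ('a \<Rightarrow> 'a \<Rightarrow> bool) \<Rightarrow> ('a \<Rightarrow> int) \<Rightarrow> 'a \<Rightarrow> 'a \<Rightarrow> int" where
  "idelay M V E c p q = delay M c (SOME xs. is_path V E p xs q)"

definition enabled :: "int \<Rightarrow> 'a set \<Rightarrow> ('a \<Rightarrow> 'a \<Rightarrow> bool) \<Rightarrow> ('a \<Rightarrow> int) \<Rightarrow> 'a \<Rightarrow> bool" where
  "enabled M V E c p \<longleftrightarrow> (\<forall>q\<in>nbrs V E p. c q = c p \<or> c q = res M (c p + 1))"

definition step :: "int \<Rightarrow> 'a set \<Rightarrow> ('a \<Rightarrow> 'a \<Rightarrow> bool) \<Rightarrow> ('a \<Rightarrow> int) \<Rightarrow> ('a \<Rightarrow> int) \<Rightarrow> bool" where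
  "step M V E c c' \<longleftrightarrow> (\<exists>S. S \<noteq> {} \<and> S \<subseteq> V \<and> (\<forall>p\<in>S. enabled M V E c p) \<and>
      c' = (\<lambda>p. if p \<in> S then res M (c p + 1) else c p))"

definition execution :: "int \<Rightarrow> 'a set \<Rightarrow> ('a \<Rightarrow> 'a \<Rightarrow> bool) \<Rightarrow> (nat \<Rightarrow> 'a \<Rightarrow> int) \<Rightarrow> bool" where
  "execution M V E \<gamma> \<longleftrightarrow> (\<forall>p\<in>V. 0 \<le> \<gamma> 0 p \<and> \<gamma> 0 p < M) \<and> (\<forall>t. step M V E (\<gamma> t) (\<gamma> (Suc t)))"

text \<open>p increments in the transition gamma_t -> gamma_{t+1} (since M >= 3, a process increments
  iff its clock changes).\<close>
definition incr :: "(nat \<Rightarrow> 'a \<Rightarrow> int) \<Rightarrow> nat \<Rightarrow> 'a \<Rightarrow> bool" where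
  "incr \<gamma> t p \<longleftrightarrow> \<gamma> (Suc t) p \<noteq> \<gamma> t p"

definition event :: "'a set \<Rightarrow> (nat \<Rightarrow> 'a \<Rightarrow> int) \<Rightarrow> 'a \<Rightarrow> nat \<Rightarrow> bool" where
  "event V \<gamma> p t \<longleftrightarrow> p \<in> V \<and> (t = 0 \<or> (\<exists>s. t = Suc s \<and> incr \<gamma> s p))"

definition leadsto :: "'a set \<Rightarrow> ('a \<Rightarrow> 'a \<Rightarrow> bool) \<Rightarrow> (nat \<Rightarrow> 'a \<Rightarrow> int) \<Rightarrow> 'a \<times> nat \<Rightarrow> 'a \<times> nat \<Rightarrow> bool" where
  "leadsto V E \<gamma> e e' \<longleftrightarrow> (case e of (q, t') \<Rightarrow> case e' of (p, t) \<Rightarrow>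
     event V \<gamma> p t \<and> 0 < t \<and> (q = p \<or> q \<in> nbrs V E p) \<and>
     event V \<gamma> q t' \<and> t' < t \<and> (\<forall>s. t' < s \<and> s < t \<longrightarrow> \<not> event V \<gamma> q s))"

definition precedes :: "'a set \<Rightarrow> ('a \<Rightarrow> 'a \<Rightarrow> bool) \<Rightarrow> (nat \<Rightarrow> 'a \<Rightarrow> int) \<Rightarrow> 'a \<times> nat \<Rightarrow> 'a \<times> nat \<Rightarrow> bool" where
  "precedes V E \<gamma> = (leadsto V E \<gamma>)\<^sup>*\<^sup>*"

definition is_cut :: "'a set \<Rightarrow> (nat \<Rightarrow> 'a \<Rightarrow> int) \<Rightarrow> ('a \<Rightarrow> nat) \<Rightarrow> bool" where
  "is_cut V \<gamma> C \<longleftrightarrow> (\<forall>p\<in>V. event V \<gamma> p (C p))"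

definition coherent :: "'a set \<Rightarrow> ('a \<Rightarrow> 'a \<Rightarrow> bool) \<Rightarrow> (nat \<Rightarrow> 'a \<Rightarrow> int) \<Rightarrow> ('a \<Rightarrow> nat) \<Rightarrow> bool" where
  "coherent V E \<gamma> C \<longleftrightarrow> is_cut V \<gamma> C \<and>
     (\<forall>p\<in>V. \<forall>q\<in>V. \<forall>t t'. precedes V E \<gamma> (q, t') (p, t) \<longrightarrow> precedes V E \<gamma> (p, t) (p, C p)
        \<longrightarrow> precedes V E \<gamma> (q, t') (q, C q))"

primrec lift :: "int \<Rightarrow> 'a set \<Rightarrow> ('a \<Rightarrow> 'a \<Rightarrow> bool) \<Rightarrow> (nat \<Rightarrow> 'a \<Rightarrow> int) \<Rightarrow> 'a \<Rightarrow> 'a \<Rightarrow> nat \<Rightarrow> int" where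
  "lift M V E \<gamma> p0 p 0 = \<gamma> 0 p0 + idelay M V E (\<gamma> 0) p0 p"
| "lift M V E \<gamma> p0 p (Suc t) = lift M V E \<gamma> p0 p t + (if incr \<gamma> t p then 1 else 0)"

definition tpk :: "int \<Rightarrow> 'a set \<Rightarrow> ('a \<Rightarrow> 'a \<Rightarrow> bool) \<Rightarrow> (nat \<Rightarrow> 'a \<Rightarrow> int) \<Rightarrow> 'a \<Rightarrow> int \<Rightarrow> 'a \<Rightarrow> nat" where
  "tpk M V E \<gamma> p0 k p = (LEAST t. lift M V E \<gamma> p0 p t = k)"

end

theory Submission
  imports Defs
begin

(* Starting from a WU0 configuration, the lifted clock L p t (an integer) is an
   honest lift of the clock p.r: at every time it is congruent to the real clock modulo M, and
   the lifted clocks of neighbours differ by at most one.  Both facts hold initially (the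
   intrinsic delay of a path is congruent to the clock difference of its end points, and the
   delay of an edge has absolute value at most one) and are preserved by every step, because an
   enabled process only moves when all its neighbours are at its value or one ahead.  Hence a
   process that increments never overtakes a neighbour, so the lifted clock is monotone along
   the causal relation.  Coherence of the cut "first time the lifted clock equals k" follows:
   a causal predecessor (q,t') of (p,t_{p,k}) has lifted clock at most k, so t' <= t_{q,k}, and
   events of one process are causally ordered by time.  Well-definedness: initially
   L p 0 = bot_0 + delta_(p0,p) <= bot_0 + D <= k, L grows by steps of at most one and, by
   liveness, without bound, so it takes the value k. *)

section \<open>Arithmetic of clocks modulo M\<close>

lemma ominus_le_one: "M > 0 \<Longrightarrow> ominus M b a \<le> 1"
proof -
  assume "M > 0"
  then have "0 \<le> (a - b) mod M" by simp
  then show ?thesis unfolding ominus_def res_def by auto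
qed

lemma ominus_ge_minus_one: "M > 0 \<Longrightarrow> loc_comp M a b \<Longrightarrow> ominus M b a \<ge> -1"
proof -
  assume "M > 0" and comparable: "loc_comp M a b"
  then have "0 \<le> (a - b) mod M" "0 \<le> (b - a) mod M" by simp_all
  then show ?thesis using comparable unfolding ominus_def res_def loc_comp_def min_def
    by (auto split: if_splits)
qed

lemma ominus_mod: "ominus M b a mod M = (b - a) mod M"
proof -
  have "(- ((a - b) mod M)) mod M = (b - a) mod M"
    by (metis minus_diff_eq mod_minus_eq)
  then show ?thesis by (simp add: ominus_def res_def)
qed

text \<open>If p is enabled and q is a neighbour whose clock lifts to b while p's lifts to a, with
  |b - a| <= 1, then q is not behind p: 0 <= b - a <= 1.  Needs M >= 3 to separate -1, 0, 1.\<close>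

lemma enabled_neighbour_not_behind:
  assumes M3: "M \<ge> 3" and en: "enabled M V E c p" and qn: "q \<in> nbrs V E p"
    and cp: "c p = a mod M" and cq: "c q = b mod M" and d: "\<bar>b - a\<bar> \<le> 1"
  shows "0 \<le> b - a \<and> b - a \<le> 1"
proof -
  have small_multiple: "x = 0" if "M dvd x" "\<bar>x\<bar> \<le> 2" for x :: int
    using that M3 dvd_imp_le_int[of x M] by (cases "x = 0") auto
  have "c q = c p \<or> c q = res M (c p + 1)" using en qn by (auto simp: enabled_def)
  then show ?thesis
  proof
    assume "c q = c p"
    then have "M dvd b - a" using cp cq by (simp add: mod_eq_dvd_iff)
    then show ?thesis using small_multiple d by fastforce
  next
    assume "c q = res M (c p + 1)"
    then have "b mod M = (a + 1) mod M" using cp cq by (simp add: res_def mod_add_left_eq)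
    then have "M dvd b - (a + 1)" by (simp add: mod_eq_dvd_iff)
    then show ?thesis using small_multiple[of "b - (a + 1)"] d by fastforce
  qed
qed

section \<open>Paths and delays\<close>

lemma adj_list_snoc: "xs \<noteq> [] \<Longrightarrow> adj_list E (xs @ [y]) = (adj_list E xs \<and> E (last xs) y)"
  by (induction E xs rule: adj_list.induct) auto

lemma delay_snoc:
  "xs \<noteq> [] \<Longrightarrow> delay M c (xs @ [y]) = delay M c xs + ominus M (c y) (c (last xs))"
  by (induction M c xs rule: delay.induct) auto

lemma delay_mod: "xs \<noteq> [] \<Longrightarrow> delay M c xs mod M = (c (last xs) - c (hd xs)) mod M"
proof (induction M c xs rule: delay.induct)
  case (3 M c x y xs)
  have "delay M c (x # y # xs) mod M
      = (ominus M (c y) (c x) mod M + delay M c (y # xs) mod M) mod M"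
    by (simp add: mod_add_eq)
  also have "\<dots> = ((c y - c x) mod M + (c (last (y # xs)) - c y) mod M) mod M"
    using 3 by (simp add: ominus_mod)
  also have "\<dots> = (c (last (x # y # xs)) - c (hd (x # y # xs))) mod M"
    by (simp add: mod_add_eq)
  finally show ?case .
qed auto

lemma delay_le_edges: "M > 0 \<Longrightarrow> xs \<noteq> [] \<Longrightarrow> delay M c xs \<le> int (length xs) - 1"
proof (induction M c xs rule: delay.induct)
  case (3 M c x y xs)
  then show ?case using ominus_le_one[of M "c y" "c x"] by simp
qed auto

lemma hop_dist_le_diameter:
  assumes "finite V" "p \<in> V" "q \<in> V"
  shows "hop_dist V E p q \<le> diameter V E"
proof -
  have "{hop_dist V E p q | p q. p \<in> V \<and> q \<in> V} = (\<lambda>(p, q). hop_dist V E p q) ` (V \<times> V)"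
    by auto
  then have "finite {hop_dist V E p q | p q. p \<in> V \<and> q \<in> V}" using assms(1) by simp
  then show ?thesis unfolding diameter_def by (rule Max_ge) (use assms in blast)
qed

lemma shortest_path_exists:
  assumes "is_path V E p xs q"
  obtains ys where "is_path V E p ys q" "length ys = Suc (hop_dist V E p q)"
proof -
  have "\<exists>ys. is_path V E p ys q \<and> length ys = Suc (hop_dist V E p q)"
    unfolding hop_dist_def
    by (rule LeastI[of _ "length xs - 1"]) (use assms in \<open>auto simp: is_path_def\<close>)
  then show ?thesis using that by blast
qed

lemma slow_growth_hits:
  fixes f :: "nat \<Rightarrow> int"
  assumes slow: "\<And>t. f (Suc t) \<le> f t + 1" and "f 0 \<le> k" and "k \<le> f T"
  shows "\<exists>t. f t = k"
  using assms(3)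
proof (induction T)
  case 0 then show ?case using assms(2) by auto
next
  case (Suc T)
  show ?case
  proof (cases "k \<le> f T")
    case True then show ?thesis using Suc.IH by blast
  next
    case False then show ?thesis using Suc.prems slow[of T] by (intro exI[of _ "Suc T"]) simp
  qed
qed

lemma constant_on_interval:
  fixes f :: "nat \<Rightarrow> 'b"
  assumes "\<And>s. a \<le> s \<Longrightarrow> s < b \<Longrightarrow> f (Suc s) = f s" and "a \<le> b"
  shows "f b = f a"
  using assms
proof (induction b)
  case (Suc b) then show ?case by (cases "a = Suc b") (auto simp: le_Suc_eq)
qed simp

section \<open>Causality\<close>

lemma last_event_before:
  assumes "event V \<gamma> q a" "a < b"
  obtains g where "a \<le> g" "g < b" "event V \<gamma> q g" "\<forall>s. g < s \<and> s < b \<longrightarrow> \<not> event V \<gamma> q s"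
proof -
  let ?Q = "\<lambda>s. s < b \<and> event V \<gamma> q s"
  define g where "g = (GREATEST s. ?Q s)"
  have Qa: "?Q a" using assms by simp
  have bound: "\<forall>y. ?Q y \<longrightarrow> y \<le> b" by auto
  have "?Q g" unfolding g_def by (rule GreatestI_nat[where P="?Q" and b=b, OF Qa]) (use bound in auto)
  moreover have "a \<le> g" unfolding g_def by (rule Greatest_le_nat[where P="?Q" and b=b, OF Qa]) (use bound in auto)
  moreover have "s \<le> g" if "?Q s" for s
    unfolding g_def by (rule Greatest_le_nat[where P="?Q" and b=b, OF that]) (use bound in auto)
  ultimately show ?thesis using that by fastforce
qed

lemma precedes_same_process:
  assumes "event V \<gamma> q a" "event V \<gamma> q b" "a \<le> b"
  shows "precedes V E \<gamma> (q, a) (q, b)"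
  using assms(2,3)
proof (induction b rule: less_induct)
  case (less b)
  show ?case
  proof (cases "a = b")
    case True then show ?thesis by (simp add: precedes_def)
  next
    case False
    then obtain g where g: "a \<le> g" "g < b" "event V \<gamma> q g"
        "\<forall>s. g < s \<and> s < b \<longrightarrow> \<not> event V \<gamma> q s"
      using last_event_before[OF assms(1)] less.prems by (metis le_neq_implies_less)
    have "precedes V E \<gamma> (q, a) (q, g)" using less.IH g by blast
    moreover have "leadsto V E \<gamma> (q, g) (q, b)" using less.prems g by (auto simp: leadsto_def)
    ultimately show ?thesis unfolding precedes_def by (rule rtranclp.rtrancl_into_rtrancl)
  qed
qed

lemma precedes_trans:
  "precedes V E \<gamma> e e' \<Longrightarrow> precedes V E \<gamma> e' e'' \<Longrightarrow> precedes V E \<gamma> e e''"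
  unfolding precedes_def by (rule rtranclp_trans)

lemma precedes_source_event:
  assumes "precedes V E \<gamma> e e'" "e \<noteq> e'"
  shows "event V \<gamma> (fst e) (snd e)"
proof -
  have "e = e' \<or> (\<exists>y. leadsto V E \<gamma> e y)"
    using assms(1) unfolding precedes_def by (induction rule: converse_rtranclp_induct) auto
  then obtain y where "leadsto V E \<gamma> e y" using assms(2) by blast
  then show ?thesis by (cases e, cases y) (auto simp: leadsto_def)
qed

section \<open>Executions of the unison algorithm\<close>

locale unison_execution =
  fixes V :: "'a set" and E :: "'a \<Rightarrow> 'a \<Rightarrow> bool" and M :: int and \<gamma> :: "nat \<Rightarrow> 'a \<Rightarrow> int"
  assumes graph: "ugraph V E" and M3: "M \<ge> 3" and exec: "execution M V E \<gamma>"
begin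

lemma edge_in_V: "E p q \<Longrightarrow> p \<in> V \<and> q \<in> V"
  using graph by (simp add: ugraph_def)

lemma edge_sym: "E p q \<Longrightarrow> E q p"
  using graph by (simp add: ugraph_def)

lemma incr_step:
  assumes "incr \<gamma> t p"
  shows "p \<in> V \<and> enabled M V E (\<gamma> t) p \<and> \<gamma> (Suc t) p = res M (\<gamma> t p + 1)"
proof -
  from exec have "step M V E (\<gamma> t) (\<gamma> (Suc t))" by (simp add: execution_def)
  then obtain S where S: "S \<subseteq> V" "\<forall>p\<in>S. enabled M V E (\<gamma> t) p"
      "\<gamma> (Suc t) = (\<lambda>p. if p \<in> S then res M (\<gamma> t p + 1) else \<gamma> t p)"
    unfolding step_def by blast
  have "p \<in> S" using assms S(3) by (auto simp: incr_def split: if_splits)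
  then show ?thesis using S by auto
qed

end

locale lifted_unison = unison_execution +
  fixes L :: "'a \<Rightarrow> nat \<Rightarrow> int"
  assumes L_Suc: "L p (Suc t) = L p t + (if incr \<gamma> t p then 1 else 0)"
    and L_init_mod: "p \<in> V \<Longrightarrow> \<gamma> 0 p = L p 0 mod M"
    and L_init_adj: "E p q \<Longrightarrow> \<bar>L q 0 - L p 0\<bar> \<le> 1"
begin

lemma L_mono: "t \<le> t' \<Longrightarrow> L p t \<le> L p t'"
  by (rule lift_Suc_mono_le) (simp_all add: L_Suc)

lemma lift_invariant:
  "(\<forall>p\<in>V. \<gamma> t p = L p t mod M) \<and> (\<forall>p q. E p q \<longrightarrow> \<bar>L q t - L p t\<bar> \<le> 1)"
proof (induction t)
  case 0 then show ?case using L_init_mod L_init_adj by auto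
next
  case (Suc t)
  have moving_not_behind: "0 \<le> L q t - L p t \<and> L q t - L p t \<le> 1"
    if "E p q" "incr \<gamma> t p" for p q
    using enabled_neighbour_not_behind[OF M3, of V E "\<gamma> t" p q "L p t" "L q t"]
      incr_step[OF that(2)] Suc edge_in_V[OF that(1)] that(1) by (auto simp: nbrs_def)
  have "\<gamma> (Suc t) p = L p (Suc t) mod M" if "p \<in> V" for p
  proof (cases "incr \<gamma> t p")
    case True
    then have "\<gamma> (Suc t) p = (L p t mod M + 1) mod M"
      using incr_step Suc that by (simp add: res_def)
    then show ?thesis using True by (simp add: L_Suc mod_add_left_eq)
  next
    case False then show ?thesis using Suc that by (simp add: L_Suc incr_def)
  qed
  moreover have "\<bar>L q (Suc t) - L p (Suc t)\<bar> \<le> 1" if "E p q" for p q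
    using moving_not_behind[OF that] moving_not_behind[OF edge_sym[OF that]] Suc that
    by (auto simp: L_Suc)
  ultimately show ?case by blast
qed

lemma incr_neighbour_bound:
  assumes "incr \<gamma> t p" "q \<in> nbrs V E p"
  shows "L q t \<le> L p t + 1"
  using enabled_neighbour_not_behind[OF M3, of V E "\<gamma> t" p q "L p t" "L q t"]
    incr_step[OF assms(1)] lift_invariant[of t] assms(2) by (auto simp: nbrs_def)

lemma leadsto_lift_mono:
  assumes "leadsto V E \<gamma> (q, t') (p, t)"
  shows "L q t' \<le> L p t"
proof -
  from assms have ev: "event V \<gamma> p t" "0 < t" "q = p \<or> q \<in> nbrs V E p" "t' < t"
    and no_event: "\<forall>s. t' < s \<and> s < t \<longrightarrow> \<not> event V \<gamma> q s"
    by (auto simp: leadsto_def)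
  show ?thesis
  proof (cases "q = p")
    case True then show ?thesis using L_mono[of t' t p] ev(4) by simp
  next
    case False
    then have qn: "q \<in> nbrs V E p" using ev by blast
    obtain s where s: "t = Suc s" "incr \<gamma> s p" using ev(1,2) by (auto simp: event_def)
    have "L q (Suc s') = L q s'" if "t' \<le> s'" "s' < s" for s'
    proof -
      have "\<not> event V \<gamma> q (Suc s')" using no_event that s(1) by simp
      then have "\<not> incr \<gamma> s' q" using qn by (simp add: event_def nbrs_def)
      then show ?thesis by (simp add: L_Suc)
    qed
    moreover have "t' \<le> s" using ev(4) s(1) by simp
    ultimately have "L q s = L q t'" by (rule constant_on_interval)
    moreover have "L q s \<le> L p s + 1" using incr_neighbour_bound[OF s(2) qn] .
    ultimately show ?thesis using s by (simp add: L_Suc)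
  qed
qed

lemma precedes_lift_mono:
  "precedes V E \<gamma> e e' \<Longrightarrow> L (fst e) (snd e) \<le> L (fst e') (snd e')"
  unfolding precedes_def
proof (induction rule: rtranclp_induct)
  case (step y z) then show ?case using leadsto_lift_mono[of "fst y" "snd y" "fst z" "snd z"] by simp
qed simp

lemma event_lift_increase: "event V \<gamma> q t \<Longrightarrow> s < t \<Longrightarrow> L q s < L q t"
  using L_mono[of s "t - 1" q] by (auto simp: event_def L_Suc)

lemma first_reach_event:
  assumes "q \<in> V" "\<exists>t. L q t = k"
  shows "event V \<gamma> q (LEAST t. L q t = k)"
proof (cases "LEAST t. L q t = k")
  case 0 then show ?thesis using assms(1) by (simp add: event_def)
next
  case (Suc s)
  have "L q (Suc s) = k" using LeastI_ex[OF assms(2)] Suc by simp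
  moreover have "L q s \<noteq> k" using not_less_Least[of s "\<lambda>t. L q t = k"] Suc by simp
  ultimately have "incr \<gamma> s q" by (auto simp: L_Suc split: if_splits)
  then show ?thesis using assms(1) Suc by (simp add: event_def)
qed

lemma first_reach_cut_coherent:
  assumes reach: "\<forall>p\<in>V. \<exists>t. L p t = k"
  shows "coherent V E \<gamma> (\<lambda>p. LEAST t. L p t = k)"
proof -
  define C where "C = (\<lambda>p. LEAST t. L p t = k)"
  have cut: "is_cut V \<gamma> C" using first_reach_event reach by (simp add: is_cut_def C_def)
  have C_value: "L q (C q) = k" if "q \<in> V" for q
    unfolding C_def by (rule LeastI_ex) (use reach that in blast)
  have "precedes V E \<gamma> (q, t') (q, C q)"
    if pV: "p \<in> V" and qV: "q \<in> V" and before: "precedes V E \<gamma> (q, t') (p, C p)" for p q t'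
  proof (cases "(q, t') = (p, C p)")
    case True then show ?thesis by (simp add: precedes_def)
  next
    case False
    then have ev: "event V \<gamma> q t'" using precedes_source_event[OF before] by simp
    have "L q t' \<le> k" using precedes_lift_mono[OF before] C_value[OF pV] by simp
    then have "t' \<le> C q" using event_lift_increase[OF ev, of "C q"] C_value[OF qV] by force
    then show ?thesis using precedes_same_process[OF ev] cut qV by (simp add: is_cut_def)
  qed
  then show ?thesis unfolding coherent_def C_def[symmetric]
    using cut precedes_trans by blast
qed

lemma lift_reaches:
  assumes live: "\<forall>t. \<exists>t'\<ge>t. incr \<gamma> t' p" and start: "L p 0 \<le> k"
  shows "\<exists>t. L p t = k"
proof -
  have unbounded: "\<exists>t. L p t \<ge> L p 0 + int n" for n
  proof (induction n)
    case (Suc n)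
    then obtain t where t: "L p t \<ge> L p 0 + int n" by blast
    obtain t' where "t' \<ge> t" "incr \<gamma> t' p" using live by blast
    then show ?case using t L_mono[of t t' p] by (intro exI[of _ "Suc t'"]) (simp add: L_Suc)
  qed auto
  obtain T where "L p T \<ge> L p 0 + int (nat (k - L p 0))" using unbounded by blast
  then have "k \<le> L p T" using start by simp
  then show ?thesis using slow_growth_hits[of "L p" k T] start by (simp add: L_Suc)
qed

end

section \<open>The lift defined from a WU0 configuration\<close>

context unison_execution
begin

lemma path_delay_intrinsic:
  assumes conn: "connected_graph V E" and wu0: "WU0 M V E (\<gamma> 0)" and path: "is_path V E p0 xs q"
  shows "delay M (\<gamma> 0) xs = idelay M V E (\<gamma> 0) p0 q"
proof -
  have "\<exists>ys. is_path V E p0 ys q"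
    using conn path by (auto simp: connected_graph_def is_path_def)
  then have "is_path V E p0 (SOME ys. is_path V E p0 ys q) q" by (rule someI_ex)
  then show ?thesis using wu0 path unfolding WU0_def idelay_def by blast
qed

lemma lift_is_lifted:
  assumes conn: "connected_graph V E" and wu0: "WU0 M V E (\<gamma> 0)" and p0V: "p0 \<in> V"
  shows "lifted_unison V E M \<gamma> (lift M V E \<gamma> p0)"
proof
  let ?\<delta> = "idelay M V E (\<gamma> 0) p0"
  have M0: "M > 0" using M3 by simp
  obtain P where P: "\<And>q. q \<in> V \<Longrightarrow> is_path V E p0 (P q) q"
    using conn p0V unfolding connected_graph_def by metis
  note P_delay = path_delay_intrinsic[OF conn wu0 P]
  show "\<gamma> 0 p = lift M V E \<gamma> p0 p 0 mod M" if pV: "p \<in> V" for p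
  proof -
    have range: "0 \<le> \<gamma> 0 p" "\<gamma> 0 p < M" using exec pV by (auto simp: execution_def)
    have "?\<delta> p mod M = (\<gamma> 0 p - \<gamma> 0 p0) mod M"
      using delay_mod[of "P p" M "\<gamma> 0"] P[OF pV] P_delay[OF pV] by (simp add: is_path_def)
    then have "(\<gamma> 0 p0 + ?\<delta> p) mod M = (\<gamma> 0 p0 + (\<gamma> 0 p - \<gamma> 0 p0)) mod M"
      by (metis mod_add_right_eq)
    then show ?thesis using range by simp
  qed
  show "\<bar>lift M V E \<gamma> p0 q 0 - lift M V E \<gamma> p0 p 0\<bar> \<le> 1" if e: "E p q" for p q
  proof -
    have pV: "p \<in> V" and qV: "q \<in> V" using edge_in_V[OF e] by auto
    have "is_path V E p0 (P p @ [q]) q"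
      using P[OF pV] e qV by (auto simp: is_path_def adj_list_snoc)
    then have "?\<delta> q = ?\<delta> p + ominus M (\<gamma> 0 q) (\<gamma> 0 p)"
      using path_delay_intrinsic[OF conn wu0] P[OF pV] P_delay[OF pV]
      by (metis delay_snoc is_path_def)
    moreover have "loc_comp M (\<gamma> 0 p) (\<gamma> 0 q)" using wu0 e by (simp add: WU0_def WU_def)
    ultimately show ?thesis
      using ominus_le_one[OF M0, of "\<gamma> 0 q" "\<gamma> 0 p"] ominus_ge_minus_one[OF M0, of "\<gamma> 0 p" "\<gamma> 0 q"] by simp
  qed
qed simp

lemma idelay_le_diameter:
  assumes conn: "connected_graph V E" and wu0: "WU0 M V E (\<gamma> 0)"
    and p0V: "p0 \<in> V" and pV: "p \<in> V"
  shows "idelay M V E (\<gamma> 0) p0 p \<le> int (diameter V E)"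
proof -
  obtain xs where "is_path V E p0 xs p" using conn p0V pV by (auto simp: connected_graph_def)
  then obtain ys where ys: "is_path V E p0 ys p" "length ys = Suc (hop_dist V E p0 p)"
    by (rule shortest_path_exists)
  have "idelay M V E (\<gamma> 0) p0 p = delay M (\<gamma> 0) ys"
    using path_delay_intrinsic[OF conn wu0 ys(1)] by simp
  also have "\<dots> \<le> int (hop_dist V E p0 p)"
    using delay_le_edges[of M ys "\<gamma> 0"] M3 ys by (simp add: is_path_def)
  also have "\<dots> \<le> int (diameter V E)"
    using hop_dist_le_diameter[OF _ p0V pV] graph by (simp add: ugraph_def)
  finally show ?thesis .
qed

end

theorem lemma2:
  fixes V :: "'a set" and E :: "'a \<Rightarrow> 'a \<Rightarrow> bool" and M :: int
    and \<gamma> :: "nat \<Rightarrow> 'a \<Rightarrow> int" and p0 :: 'a and k :: int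
  assumes graph: "ugraph V E" and conn: "connected_graph V E" and two: "card V \<ge> 2"
    and M3: "M \<ge> 3"
    and exec: "execution M V E \<gamma>"
    and wu0: "WU0 M V E (\<gamma> 0)"
    and live: "\<forall>p\<in>V. \<forall>t. \<exists>t'\<ge>t. incr \<gamma> t' p"
    and p0V: "p0 \<in> V"
    and p0min: "\<forall>q\<in>V. idelay M V E (\<gamma> 0) p0 q \<ge> 0"
    and k: "k \<ge> \<gamma> 0 p0 + int (diameter V E)"
  shows "(\<forall>p\<in>V. \<exists>t. lift M V E \<gamma> p0 p t = k) \<and> coherent V E \<gamma> (tpk M V E \<gamma> p0 k)"
proof -
  interpret unison_execution V E M \<gamma> using graph M3 exec by unfold_locales
  interpret lifted_unison V E M \<gamma> "lift M V E \<gamma> p0"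
    using lift_is_lifted[OF conn wu0 p0V] .
  have reach: "\<forall>p\<in>V. \<exists>t. lift M V E \<gamma> p0 p t = k"
  proof
    fix p assume pV: "p \<in> V"
    have "lift M V E \<gamma> p0 p 0 \<le> k"
      using idelay_le_diameter[OF conn wu0 p0V pV] k by simp
    then show "\<exists>t. lift M V E \<gamma> p0 p t = k" using lift_reaches live pV by blast
  qed
  moreover have "coherent V E \<gamma> (tpk M V E \<gamma> p0 k)"
    using first_reach_cut_coherent[OF reach] unfolding tpk_def .
  ultimately show ?thesis ..
qed

end
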